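(* Let $(a_n)_{n\ge0}$ and $(b_n)_{n\ge0}$ be bounded sequences of nonnegative real numbers such that $\sum_n b_n=+\infty$ and $a_n=o(b_n)$, i.e. there is a sequence $c_n\to0$ with $a_n\le c_nb_n$ for all $n$. Then there exists an increasing function $\theta:\mathbb N\to\mathbb N$ such that $\sum_n a_{\theta(n)}<+\infty$ and $\sum_n b_{\theta(n)}=+\infty$. *)

theory Defs
  imports "HOL-Analysis.Analysis"
begin

end

theory Submission
  imports Defs
begin

(* Split the index set into consecutive disjoint blocks
   I_k = {lo k ..< hi k} such that every block carries b-mass between 1 and 1 + B
   (B a bound for b; possible since the series of b diverges) and starts so late that
   |c n| <= 2^-k on I_k.  Then the a-mass of I_k is at most (1 + B) 2^-k, so a is
   summable on U = (UN k. I_k), whereas b is not, since every block has b-mass >= 1.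
   Enumerating the infinite set U increasingly gives the required theta. *)

lemma summable_on_blocks_iff:
  fixes f :: "'a \<Rightarrow> real" and I :: "nat \<Rightarrow> 'a set"
  assumes fin: "\<And>k. finite (I k)" and nonneg: "\<And>x. f x \<ge> 0" and disj: "disjoint_family I"
  shows "f summable_on (\<Union>k. I k) \<longleftrightarrow> summable (\<lambda>k. sum f (I k))"
proof -
  have "f summable_on (\<Union>k. I k) \<longleftrightarrow> (\<lambda>k. sum f (I k)) summable_on UNIV"
    using disj by (intro summable_on_Union_iff) (auto simp: fin nonneg)
  also have "\<dots> \<longleftrightarrow> summable (\<lambda>k. sum f (I k))"
    by (intro summable_on_UNIV_nonneg_real_iff sum_nonneg nonneg)
  finally show ?thesis .
qed

lemma summable_on_light_blocks:
  fixes f :: "'a \<Rightarrow> real" and I :: "nat \<Rightarrow> 'a set"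
  assumes "\<And>k. finite (I k)" and nonneg: "\<And>x. f x \<ge> 0" and "disjoint_family I"
    and light: "\<And>k. sum f (I k) \<le> C * (1/2)^k"
  shows "f summable_on (\<Union>k. I k)"
proof -
  have "summable (\<lambda>k. sum f (I k))"
    by (rule summable_comparison_test'[where N = 0, OF summable_mult[OF summable_geometric]])
      (use light in \<open>auto simp: sum_nonneg nonneg\<close>)
  with assms show ?thesis by (simp add: summable_on_blocks_iff)
qed

lemma not_summable_on_heavy_blocks:
  fixes f :: "'a \<Rightarrow> real" and I :: "nat \<Rightarrow> 'a set"
  assumes "\<And>k. finite (I k)" and "\<And>x. f x \<ge> 0" and "disjoint_family I"
    and heavy: "\<And>k. 1 \<le> sum f (I k)"
  shows "\<not> f summable_on (\<Union>k. I k)"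
proof
  assume "f summable_on (\<Union>k. I k)"
  with assms have "summable (\<lambda>k. sum f (I k))" by (simp add: summable_on_blocks_iff)
  hence "summable (\<lambda>_::nat. 1::real)"
    by (rule summable_comparison_test'[where N = 0]) (use heavy in auto)
  thus False by (simp add: summable_const_iff)
qed

lemma summable_enumerate_iff:
  fixes f :: "nat \<Rightarrow> real"
  assumes S: "infinite S" and nonneg: "\<And>n. f n \<ge> 0"
  shows "summable (\<lambda>n. f (enumerate S n)) \<longleftrightarrow> f summable_on S"
proof -
  have inj: "inj (enumerate S)"
    using strict_mono_enumerate[OF S] by (rule strict_mono_imp_inj_on)
  have "summable (\<lambda>n. f (enumerate S n)) \<longleftrightarrow> (f \<circ> enumerate S) summable_on UNIV"
    by (simp add: summable_on_UNIV_nonneg_real_iff nonneg o_def)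
  also have "\<dots> \<longleftrightarrow> f summable_on S"
    using summable_on_reindex[OF inj, of f] range_enumerate[OF S] by simp
  finally show ?thesis .
qed

(* A divergent nonnegative series with terms bounded by B has, beyond any starting
   point p, a block {p..<m} whose mass lies between t and t + B: stop at the first
   index where the partial sum from p reaches t. *)
lemma block_of_bounded_mass:
  fixes b :: "nat \<Rightarrow> real"
  assumes b_nonneg: "\<And>n. b n \<ge> 0" and b_le: "\<And>n. b n \<le> B" and b_div: "\<not> summable b"
    and t_pos: "0 < t"
  shows "\<exists>m. p < m \<and> t \<le> sum b {p..<m} \<and> sum b {p..<m} \<le> t + B"
proof -
  have reach: "\<exists>m. t \<le> sum b {p..<m}"
  proof (rule ccontr)
    assume "\<not> ?thesis"
    hence "sum (\<lambda>i. b (i + p)) {..n} \<le> t" for n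
      using sum.shift_bounds_nat_ivl[of b 0 p "Suc n"]
      by (metis atLeast0AtMost add_0 atLeastLessThanSuc_atLeastAtMost linorder_not_le
          order_less_imp_le)
    hence "summable (\<lambda>i. b (i + p))"
      by (intro bounded_imp_summable) (simp_all add: b_nonneg)
    with b_div show False by simp
  qed
  define m where "m = (LEAST m. t \<le> sum b {p..<m})"
  have m_reach: "t \<le> sum b {p..<m}"
    unfolding m_def by (rule LeastI_ex[OF reach])
  have "p < m"
    using m_reach t_pos by (cases "p < m") auto
  then obtain m' where m': "m = Suc m'" "p \<le> m'"
    by (metis less_eq_Suc_le Suc_le_D Suc_le_mono)
  have "\<not> t \<le> sum b {p..<m'}"
    using not_less_Least[of m' "\<lambda>m. t \<le> sum b {p..<m}"] m' by (simp add: m_def)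
  moreover have "sum b {p..<m} = sum b {p..<m'} + b m'"
    using m' by simp
  ultimately have "sum b {p..<m} \<le> t + B"
    using b_le[of m'] by simp
  with m_reach \<open>p < m\<close> show ?thesis by blast
qed

lemma thresholds_of_null_sequence:
  fixes c :: "nat \<Rightarrow> real"
  assumes c_lim: "c \<longlonglongrightarrow> 0" and e_pos: "\<And>k. 0 < e k"
  obtains N where "\<And>k n. N k \<le> n \<Longrightarrow> \<bar>c n\<bar> \<le> e k"
proof -
  have "\<exists>N. \<forall>n\<ge>N. \<bar>c n\<bar> \<le> e k" for k
    using LIMSEQ_D[OF c_lim e_pos[of k]] by (metis less_imp_le real_norm_def diff_zero)
  then obtain N where "\<And>k. \<forall>n\<ge>N k. \<bar>c n\<bar> \<le> e k" by metis
  with that show ?thesis by blast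
qed

lemma disjoint_intervals_beyond:
  fixes N :: "nat \<Rightarrow> nat"
  assumes next_block: "\<And>p. \<exists>m. p < m \<and> Q p m"
  obtains lo hi :: "nat \<Rightarrow> nat"
  where "\<And>k. N k \<le> lo k" and "\<And>k. Q (lo k) (hi k)"
    and "disjoint_family (\<lambda>k. {lo k..<hi k})"
proof -
  obtain g where g: "\<And>p. p < g p" "\<And>p. Q p (g p)"
    using next_block by metis
  define lo where "lo = rec_nat (N 0) (\<lambda>k p. max (g p) (N (Suc k)))"
  define hi where "hi k = g (lo k)" for k
  have lo_N: "N k \<le> lo k" for k
    by (cases k) (simp_all add: lo_def)
  have hi_lo_Suc: "hi k \<le> lo (Suc k)" for k
    by (simp add: lo_def hi_def)
  have "strict_mono lo"
    by (rule strict_monoI_Suc) (metis g(1) hi_def hi_lo_Suc order_less_le_trans)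
  have "{lo j..<hi j} \<inter> {lo k..<hi k} = {}" if "j < k" for j k
  proof -
    have "hi j \<le> lo k"
      using hi_lo_Suc[of j] \<open>strict_mono lo\<close> that
      by (metis Suc_leI order_trans strict_mono_less_eq)
    thus ?thesis by auto
  qed
  hence disj: "disjoint_family (\<lambda>k. {lo k..<hi k})"
    unfolding disjoint_family_on_def by (metis Int_commute nat_neq_iff)
  show ?thesis
    by (rule that[OF lo_N _ disj]) (simp add: hi_def g(2))
qed

lemma sum_le_scaled_sum:
  fixes a b c :: "'a \<Rightarrow> real"
  assumes "\<And>n. n \<in> A \<Longrightarrow> a n \<le> c n * b n" and "\<And>n. n \<in> A \<Longrightarrow> \<bar>c n\<bar> \<le> e"
    and "\<And>n. n \<in> A \<Longrightarrow> 0 \<le> b n"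
  shows "sum a A \<le> e * sum b A"
proof -
  have "a n \<le> e * b n" if "n \<in> A" for n
    using assms[OF that] by (metis abs_ge_self mult_right_mono order_trans)
  hence "sum a A \<le> (\<Sum>n\<in>A. e * b n)" by (rule sum_mono)
  thus ?thesis by (simp add: sum_distrib_left)
qed

theorem lemma13:
  fixes a b c :: "nat \<Rightarrow> real"
  assumes a_nonneg: "\<And>n. a n \<ge> 0" and b_nonneg: "\<And>n. b n \<ge> 0"
    and a_bdd: "bounded (range a)" and b_bdd: "bounded (range b)"
    and b_div: "\<not> summable b"
    and c_lim: "c \<longlonglongrightarrow> 0" and a_le: "\<And>n. a n \<le> c n * b n"
  shows "\<exists>\<theta>::nat \<Rightarrow> nat. strict_mono \<theta> \<and> summable (\<lambda>n. a (\<theta> n)) \<and> \<not> summable (\<lambda>n. b (\<theta> n))"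
proof -
  obtain B where b_le: "\<And>n. b n \<le> B"
    using b_bdd unfolding bounded_iff by (metis rangeI real_norm_def abs_le_D1)
  obtain N where N: "\<And>k n. N k \<le> n \<Longrightarrow> \<bar>c n\<bar> \<le> (1/2)^k"
    by (rule thresholds_of_null_sequence[OF c_lim, of "\<lambda>k. (1/2)^k"]) auto
  obtain lo hi where lo_N: "\<And>k. N k \<le> lo k"
    and b_block: "\<And>k. 1 \<le> sum b {lo k..<hi k} \<and> sum b {lo k..<hi k} \<le> 1 + B"
    and disj: "disjoint_family (\<lambda>k. {lo k..<hi k})"
    by (rule disjoint_intervals_beyond[where Q = "\<lambda>p m. 1 \<le> sum b {p..<m} \<and> sum b {p..<m} \<le> 1 + B" and N = N])
      (use block_of_bounded_mass[OF b_nonneg b_le b_div, of 1] in auto)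
  define U where "U = (\<Union>k. {lo k..<hi k})"
  have a_block: "sum a {lo k..<hi k} \<le> (1 + B) * (1/2)^k" for k
  proof -
    have "sum a {lo k..<hi k} \<le> (1/2)^k * sum b {lo k..<hi k}"
      using lo_N[of k] by (intro sum_le_scaled_sum[where c = c] a_le b_nonneg N) auto
    also have "\<dots> \<le> (1/2)^k * (1 + B)"
      using b_block[of k] by (intro mult_left_mono) auto
    finally show ?thesis by (simp add: mult.commute)
  qed
  have a_summable: "a summable_on U"
    unfolding U_def using disj a_block by (intro summable_on_light_blocks) (auto simp: a_nonneg)
  have b_not_summable: "\<not> b summable_on U"
    unfolding U_def using disj b_block by (intro not_summable_on_heavy_blocks) (auto simp: b_nonneg)
  hence "infinite U" by auto
  hence "strict_mono (enumerate U)"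
    and "summable (\<lambda>n. a (enumerate U n))" and "\<not> summable (\<lambda>n. b (enumerate U n))"
    using a_summable b_not_summable
    by (simp_all add: strict_mono_enumerate summable_enumerate_iff a_nonneg b_nonneg)
  thus ?thesis by blast
qed

end
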